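(* Consider the FlexGT/Acc-FlexGT recursion in the context, and suppose (S), (V), (G) hold. If $\gamma\le\frac{1}{4\beta L}$, then for all $K\ge1$, $$\frac1K\sum_{k=0}^{K-1}\mathbb{E}\|\tilde{\mathbf x}_{\beta k}\|^2\le\frac{2\mathbb{E}\|\tilde{\mathbf x}_0\|^2}{(1-\bar\rho_W)K}+\frac{16n\gamma^2\beta^2\bar\rho_W}{(1-\bar\rho_W)^2}\sigma^2+\frac{8\gamma^2\beta^2\bar\rho_W}{(1-\bar\rho_W)^2K}\sum_{k=0}^{K-1}\mathbb{E}\|\tilde{\mathbf y}_{\beta k}\|^2 .$$
   Context: Problem: $n$ nodes, each with $f_i(x)=\mathbb{E}_{\xi_i\sim\mathcal D_i}[f_i(x;\xi_i)]$ on $\mathbb{R}^p$, $f=\frac1n\sum_i f_i$. Stochastic oracle: unbiased $\nabla f_i(x;\xi_i)$, independent samples across nodes and iterations. Assumptions: (S) each $f_i$ has $L$-Lipschitz gradient. (V) $\mathbb{E}\|\nabla f_i(x;\xi_i)-\nabla f_i(x)\|^2\le\sigma^2$. (G) $W$ doubly stochastic, $\rho_W:=\|W-\mathbf J\|_2^2<1$, $\mathbf J=\mathbf 1\mathbf 1^\top/n$. Algorithm: integers $\alpha,\beta\ge1$, stepsize $\gamma>0$; $\bar W=W^\alpha$ (FlexGT) or $\bar W=M_\alpha$ (Acc-FlexGT) with $M_{-1}=M_0=I$, $M_{s+1}=(1+\eta)WM_s-\eta M_{s-1}$, $\eta=\frac{1-\sqrt{1-\rho_W}}{1+\sqrt{1-\rho_W}}$;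 $\bar\rho_W:=\|\bar W-\mathbf J\|_2^2$ (spectral norm), assumed $<1$. Iterates $\mathbf x_t,\mathbf y_t\in\mathbb{R}^{n\times p}$; snapshot $\mathbf z_t=\mathbf x_{\beta\lfloor t/\beta\rfloor}$; $\nabla G_t$ has rows $\nabla f_i(z_{i,t};\xi_{i,t})$ with fresh samples. $\mathbf y_0=\nabla G_0$. For round $k\ge0$, $j=0,\dots,\beta-2$: $\mathbf x_{\beta k+j+1}=\mathbf x_{\beta k+j}-\gamma\mathbf y_{\beta k+j}$, $\mathbf y_{\beta k+j+1}=\mathbf y_{\beta k+j}+\nabla G_{\beta k+j+1}-\nabla G_{\beta k+j}$; round end: $\mathbf x_{\beta(k+1)}=\bar W(\mathbf x_{\beta k}-\gamma\sum_{j=0}^{\beta-1}\mathbf y_{\beta k+j})$, $\mathbf y_{\beta(k+1)}=\bar W(\mathbf y_{\beta k}+\nabla G_{\beta(k+1)}-\nabla G_{\beta k})$. Notation: $\|\cdot\|$ Euclidean/Frobenius; $\bar x_t=\mathbf 1^\top\mathbf x_t/n$, $\tilde{\mathbf x}_t=\mathbf x_t-\mathbf 1\bar x_t$, $\bar y_t=\mathbf 1^\top\mathbf y_t/n$, $\tilde{\mathbf y}_t=\mathbf y_t-\mathbf 1\bar y_t$. *)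

theory Defs
  imports "HOL-Analysis.Analysis" "HOL-Probability.Probability"
begin

definition avgJ :: "real^'n^'n" where
  "avgJ = (\<chi> i j. 1 / real CARD('n))"

definition spec_sq :: "real^'n^'n \<Rightarrow> real" where
  "spec_sq A = (onorm (\<lambda>v::real^'n. A *v v))\<^sup>2"

definition doubly_stochastic :: "real^'n^'n \<Rightarrow> bool" where
  "doubly_stochastic W \<longleftrightarrow>
     (\<forall>i j. 0 \<le> W $ i $ j) \<and> (\<forall>i. (\<Sum>j\<in>UNIV. W $ i $ j) = 1) \<and> (\<forall>j. (\<Sum>i\<in>UNIV. W $ i $ j) = 1)"

primrec mat_pow :: "real^'n^'n \<Rightarrow> nat \<Rightarrow> real^'n^'n" where
  "mat_pow W 0 = mat 1"
| "mat_pow W (Suc k) = W ** mat_pow W k"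

text \<open>Chebyshev-type accelerated mixing (Acc-FlexGT):
  M_{-1} = M_0 = I, M_{s+1} = (1+eta) W M_s - eta M_{s-1}.\<close>
fun acc_mix :: "real^'n^'n \<Rightarrow> real \<Rightarrow> nat \<Rightarrow> real^'n^'n" where
  "acc_mix W eta 0 = mat 1"
| "acc_mix W eta (Suc 0) = (1 + eta) *\<^sub>R (W ** mat 1) - eta *\<^sub>R mat 1"
| "acc_mix W eta (Suc (Suc s)) = (1 + eta) *\<^sub>R (W ** acc_mix W eta (Suc s)) - eta *\<^sub>R acc_mix W eta s"

definition acc_eta :: "real \<Rightarrow> real" where
  "acc_eta rho = (1 - sqrt (1 - rho)) / (1 + sqrt (1 - rho))"

text \<open>Row average and consensus deviation of an n x p matrix (rows = nodes).\<close>
definition row_avg :: "real^'p^'n \<Rightarrow> real^'p" where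
  "row_avg X = (1 / real CARD('n)) *\<^sub>R (\<Sum>i\<in>UNIV. X $ i)"

definition dev :: "real^'p^'n \<Rightarrow> real^'p^'n" where
  "dev X = (\<chi> i. X $ i - row_avg X)"

end

(* Because Wbar fixes the network average, the consensus error of the round iterates obeys
   dev x_(beta(k+1)) = (Wbar - J) (dev x_(beta k) - gamma dev (sum_j y_(beta k + j))),
   so Young's inequality contracts it by (1 + rho_bar)/2 up to a multiple of the consensus error
   of the round sum of directions. Within a round all stochastic gradients are taken at the same
   snapshot, so that sum is beta y_(beta k) plus oracle noise; every noise term is orthogonal in L2
   to everything computed before its sample was drawn, so the noise contributes only
   O(n beta^2 sigma^2) per round. Summing the resulting linear recursion over the rounds gives the bound. *)

theory Submission
  imports Defs
begin

section \<open>Matrices and consensus deviation\<close>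

lemma linear_matrix_mult_right: "linear (\<lambda>X::real^'p^'n. (A::real^'n^'m) ** X)"
  by (rule linearI)
    (simp_all add: vec_eq_iff matrix_matrix_mult_def sum.distrib distrib_left sum_distrib_left
      mult.left_commute)

lemma linear_matrix_mult_left: "linear (\<lambda>A::real^'n^'m. A ** (X::real^'p^'n))"
  by (rule linearI)
    (simp_all add: vec_eq_iff matrix_matrix_mult_def sum.distrib sum_distrib_left distrib_right mult.assoc)

lemma norm_vec_sq: "(norm (x::'a::real_normed_vector^'n))\<^sup>2 = (\<Sum>i\<in>UNIV. (norm (x $ i))\<^sup>2)"
  by (simp add: norm_vec_def L2_set_def sum_nonneg)

lemma norm_matrix_mult_le:
  "norm ((A::real^'n^'m) ** (X::real^'p^'n)) \<le> onorm (\<lambda>v. A *v v) * norm X"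
proof -
  let ?col = "\<lambda>k. (\<chi> i. X $ i $ k) :: real^'n"
  have bl: "bounded_linear (\<lambda>v. A *v v)" by simp
  have col: "(A ** X) $ i $ k = (A *v ?col k) $ i" for i k
    by (simp add: matrix_matrix_mult_def matrix_vector_mult_def)
  have "(norm (A ** X))\<^sup>2 = (\<Sum>k\<in>UNIV. \<Sum>i\<in>UNIV. ((A *v ?col k) $ i)\<^sup>2)"
    by (simp add: norm_vec_sq col) (rule sum.swap)
  also have "\<dots> = (\<Sum>k\<in>UNIV. (norm (A *v ?col k))\<^sup>2)"
    by (simp only: norm_vec_sq real_norm_def power2_abs)
  also have "\<dots> \<le> (\<Sum>k\<in>UNIV. (onorm (\<lambda>v. A *v v) * norm (?col k))\<^sup>2)"
    by (intro sum_mono power_mono onorm[OF bl]) simp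
  also have "\<dots> = (onorm (\<lambda>v. A *v v))\<^sup>2 * (\<Sum>k\<in>UNIV. \<Sum>i\<in>UNIV. (X $ i $ k)\<^sup>2)"
    by (simp add: power_mult_distrib sum_distrib_left norm_vec_sq)
  also have "(\<Sum>k\<in>UNIV. \<Sum>i\<in>UNIV. (X $ i $ k)\<^sup>2) = (norm X)\<^sup>2"
    by (subst sum.swap) (simp add: norm_vec_sq)
  finally have "(norm (A ** X))\<^sup>2 \<le> (onorm (\<lambda>v. A *v v) * norm X)\<^sup>2"
    by (simp add: power_mult_distrib)
  then show ?thesis
    using onorm_pos_le[OF bl] by (simp add: power2_le_iff_abs_le)
qed

lemma norm_matrix_mult_sq_le:
  "(norm ((A::real^'n^'n) ** (X::real^'p^'n)))\<^sup>2 \<le> spec_sq A * (norm X)\<^sup>2"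
proof -
  have "(norm (A ** X))\<^sup>2 \<le> (onorm (\<lambda>v. A *v v) * norm X)\<^sup>2"
    by (rule power_mono[OF norm_matrix_mult_le]) simp
  then show ?thesis by (simp add: spec_sq_def power_mult_distrib)
qed

lemma spec_sq_nonneg: "0 \<le> spec_sq A"
  by (simp add: spec_sq_def)

lemma avgJ_mult_row: "((avgJ::real^'n^'n) ** X) $ i = row_avg X"
  by (simp add: vec_eq_iff avgJ_def matrix_matrix_mult_def row_avg_def sum_component sum_distrib_left)

lemma avgJ_idem: "(avgJ::real^'n^'n) ** avgJ = avgJ"
  by (simp add: vec_eq_iff matrix_matrix_mult_def avgJ_def field_simps)

lemma dev_eq: "dev X = X - avgJ ** X"
  by (simp add: dev_def vec_eq_iff avgJ_mult_row)

lemma linear_dev: "linear dev"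
  unfolding dev_eq[abs_def]
  by (intro linear_compose_sub linear_ident linear_matrix_mult_right)

lemma norm_dev_le: "norm (dev (X::real^'p^'n)) \<le> norm X"
proof -
  let ?m = "row_avg X"
  have sum_rows: "(\<Sum>i\<in>UNIV. X $ i) = real CARD('n) *\<^sub>R ?m"
    by (simp add: row_avg_def)
  have "(norm (dev X))\<^sup>2 = (\<Sum>i\<in>UNIV. (norm (X $ i - ?m))\<^sup>2)"
    by (simp add: norm_vec_sq dev_def)
  also have "\<dots> = (\<Sum>i\<in>UNIV. (norm (X $ i))\<^sup>2 - 2 * (X $ i \<bullet> ?m) + (norm ?m)\<^sup>2)"
    by (simp add: power2_norm_eq_inner inner_diff_left inner_diff_right inner_commute algebra_simps)
  also have "\<dots> = (\<Sum>i\<in>UNIV. (norm (X $ i))\<^sup>2) - 2 * ((\<Sum>i\<in>UNIV. X $ i) \<bullet> ?m)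
      + real CARD('n) * (norm ?m)\<^sup>2"
    by (simp add: sum.distrib sum_subtractf inner_sum_left sum_distrib_left)
  also have "\<dots> = (\<Sum>i\<in>UNIV. (norm (X $ i))\<^sup>2) - real CARD('n) * (norm ?m)\<^sup>2"
    by (simp add: sum_rows power2_norm_eq_inner)
  also have "\<dots> \<le> (norm X)\<^sup>2"
    by (simp add: norm_vec_sq sum_nonneg)
  finally show ?thesis by (simp add: power2_le_iff_abs_le)
qed

definition preserves_average :: "real^'n^'n \<Rightarrow> bool" where
  "preserves_average A \<longleftrightarrow> A ** avgJ = avgJ \<and> avgJ ** A = avgJ"

lemma dev_matrix_mult:
  assumes "preserves_average A"
  shows "dev (A ** X) = (A - avgJ) ** dev X"
  using assms
  by (simp add: preserves_average_def dev_eq matrix_mul_assoc avgJ_idem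
      linear_diff[OF linear_matrix_mult_left] linear_diff[OF linear_matrix_mult_right])

lemma preserves_average_mat_1: "preserves_average (mat 1)"
  by (simp add: preserves_average_def)

lemma preserves_average_mult:
  "preserves_average A \<Longrightarrow> preserves_average B \<Longrightarrow> preserves_average (A ** B)"
  unfolding preserves_average_def by (metis matrix_mul_assoc)

lemma preserves_average_affine_comb:
  assumes "preserves_average A" "preserves_average B" "a - b = 1"
  shows "preserves_average (a *\<^sub>R A - b *\<^sub>R B)"
  using assms
  by (simp add: preserves_average_def linear_diff[OF linear_matrix_mult_left]
      linear_diff[OF linear_matrix_mult_right] linear_scale[OF linear_matrix_mult_left]
      linear_scale[OF linear_matrix_mult_right] flip: scaleR_left_diff_distrib)

lemma doubly_stochastic_preserves_average:
  assumes "doubly_stochastic W"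
  shows "preserves_average W"
proof -
  have "\<And>i. (\<Sum>j\<in>UNIV. W $ i $ j) = 1" and "\<And>j. (\<Sum>i\<in>UNIV. W $ i $ j) = 1"
    using assms by (auto simp: doubly_stochastic_def)
  then show ?thesis
    by (simp add: preserves_average_def vec_eq_iff matrix_matrix_mult_def avgJ_def
        flip: sum_divide_distrib)
qed

lemma mat_pow_preserves_average:
  "preserves_average W \<Longrightarrow> preserves_average (mat_pow W k)"
  by (induction k) (auto simp: preserves_average_mat_1 preserves_average_mult)

lemma acc_mix_preserves_average:
  "preserves_average W \<Longrightarrow> preserves_average (acc_mix W eta k)"
  by (induction W eta k rule: acc_mix.induct)
    (simp_all add: preserves_average_affine_comb preserves_average_mult preserves_average_mat_1)

lemma norm_add_sq_le: "(norm (a + b :: 'v::real_normed_vector))\<^sup>2 \<le> 2 * (norm a)\<^sup>2 + 2 * (norm b)\<^sup>2"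
proof -
  have "(norm (a + b))\<^sup>2 \<le> (norm a + norm b)\<^sup>2"
    by (simp add: power_mono norm_triangle_ineq)
  also have "\<dots> \<le> 2 * (norm a)\<^sup>2 + 2 * (norm b)\<^sup>2"
    using sum_squares_bound[of "norm a" "norm b"] by (simp add: power2_sum)
  finally show ?thesis .
qed

lemma norm_diff_sq_le: "(norm (a - b :: 'v::real_normed_vector))\<^sup>2 \<le> 2 * (norm a)\<^sup>2 + 2 * (norm b)\<^sup>2"
  using norm_add_sq_le[of a "- b"] by simp

lemma abs_inner_le_norm_sq_add: "\<bar>(a::'v::real_inner) \<bullet> b\<bar> \<le> (norm a)\<^sup>2 + (norm b)\<^sup>2"
proof -
  have "\<bar>a \<bullet> b\<bar> \<le> norm a * norm b" by (rule Cauchy_Schwarz_ineq2)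
  also have "\<dots> \<le> (norm a)\<^sup>2 + (norm b)\<^sup>2"
  proof -
    have "2 * (norm a * norm b) \<le> (norm a)\<^sup>2 + (norm b)\<^sup>2"
      using sum_squares_bound[of "norm a" "norm b"] by (simp add: power2_eq_square mult.assoc)
    then show ?thesis
      using mult_nonneg_nonneg[OF norm_ge_zero norm_ge_zero, of a b] by linarith
  qed
  finally show ?thesis .
qed

text \<open>Young's inequality with weight \<open>(1 - \<rho>) / (2 \<rho>)\<close>, chosen so that the contraction
  factor \<open>\<rho>\<close> becomes \<open>(1 + \<rho>) / 2\<close>.\<close>
lemma young_contraction:
  fixes \<rho> p q r :: real
  assumes "0 \<le> \<rho>" "\<rho> < 1" "0 \<le> p" "0 \<le> q" "0 \<le> r" "r \<le> p + q"
  shows "\<rho> * r\<^sup>2 \<le> (1 + \<rho>) / 2 * p\<^sup>2 + 2 * \<rho> / (1 - \<rho>) * q\<^sup>2"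
proof -
  have "\<rho> * r\<^sup>2 \<le> \<rho> * (p + q)\<^sup>2"
    using assms by (intro mult_left_mono power_mono) auto
  moreover have "(1 - \<rho>) * (1 + \<rho>) * p\<^sup>2 + 4 * \<rho> * q\<^sup>2 - 2 * (1 - \<rho>) * (\<rho> * (p + q)\<^sup>2)
      = ((1 - \<rho>) * p - 2 * \<rho> * q)\<^sup>2 + 2 * \<rho> * (1 - \<rho>) * q\<^sup>2"
    by (simp add: power2_eq_square algebra_simps)
  moreover have "0 \<le> 2 * \<rho> * (1 - \<rho>) * q\<^sup>2"
    using assms by simp
  ultimately have "2 * (1 - \<rho>) * (\<rho> * r\<^sup>2) \<le> (1 - \<rho>) * (1 + \<rho>) * p\<^sup>2 + 4 * \<rho> * q\<^sup>2"
    using assms by (smt (verit) mult_left_mono zero_le_power2)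
  then show ?thesis
    using assms by (simp add: field_simps)
qed

lemma sum_le_of_contraction:
  fixes e c :: "nat \<Rightarrow> real"
  assumes "\<rho> < 1" "\<And>k. 0 \<le> e k" "\<And>k. e (Suc k) \<le> (1 + \<rho>) / 2 * e k + c k"
  shows "(\<Sum>k<K. e k) \<le> 2 / (1 - \<rho>) * (e 0 + (\<Sum>k<K. c k))"
proof -
  let ?S = "\<Sum>k<K. e k"
  have "?S \<le> (\<Sum>k<Suc K. e k)"
    using assms(2)[of K] by simp
  also have "\<dots> = e 0 + (\<Sum>k<K. e (Suc k))"
    by (rule sum.lessThan_Suc_shift)
  also have "(\<Sum>k<K. e (Suc k)) \<le> (\<Sum>k<K. (1 + \<rho>) / 2 * e k + c k)"
    by (intro sum_mono assms(3))
  also have "\<dots> = (1 + \<rho>) / 2 * ?S + (\<Sum>k<K. c k)"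
    by (simp add: sum.distrib sum_distrib_left)
  finally have "(1 - \<rho>) / 2 * ?S \<le> e 0 + (\<Sum>k<K. c k)"
    by (simp add: field_simps)
  then show ?thesis
    using assms(1) by (simp add: field_simps)
qed

section \<open>Square-integrable random variables\<close>

lemma borel_measurable_vec_nth [measurable (raw)]:
  fixes f :: "'a \<Rightarrow> 'b::euclidean_space^'n"
  shows "f \<in> borel_measurable N \<Longrightarrow> (\<lambda>\<omega>. f \<omega> $ i) \<in> borel_measurable N"
  by (erule measurable_compose[OF _ borel_measurable_continuous_onI])
    (intro linear_continuous_on bounded_linear_vec_nth bounded_linear_ident)

lemma borel_measurable_vec_lambda [measurable (raw)]:
  fixes f :: "'n::finite \<Rightarrow> 'a \<Rightarrow> 'b::euclidean_space"
  assumes "\<And>i. f i \<in> borel_measurable N"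
  shows "(\<lambda>\<omega>. \<chi> i. f i \<omega>) \<in> borel_measurable N"
proof -
  have eq: "(\<lambda>\<omega>. \<chi> i. f i \<omega>) = (\<lambda>\<omega>. \<Sum>j\<in>UNIV. axis j (f j \<omega>))"
    by (auto simp: vec_eq_iff sum_component axis_def if_distrib cong: if_cong)
  have "continuous_on UNIV (\<lambda>a::'b. axis j a :: 'b^'n)" for j
    unfolding axis_def
    by (intro continuous_on_vec_lambda, rename_tac i, case_tac "i = j")
      (auto intro: continuous_intros)
  then show ?thesis
    unfolding eq
    by (intro borel_measurable_sum measurable_compose[OF assms borel_measurable_continuous_onI])
qed

lemma borel_measurable_matrix_mult [measurable (raw)]:
  fixes f :: "'a \<Rightarrow> real^'p^'m"
  shows "f \<in> borel_measurable N \<Longrightarrow> (\<lambda>\<omega>. (A::real^'m^'n) ** f \<omega>) \<in> borel_measurable N"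
  unfolding matrix_matrix_mult_def by measurable

definition square_integrable :: "'a measure \<Rightarrow> ('a \<Rightarrow> 'b::real_normed_vector) \<Rightarrow> bool" where
  "square_integrable N f \<longleftrightarrow> integrable N (\<lambda>\<omega>. (norm (f \<omega>))\<^sup>2)"

lemma square_integrable_bound:
  fixes f :: "'a \<Rightarrow> 'b::euclidean_space"
  assumes "f \<in> borel_measurable N" "integrable N h" "\<And>\<omega>. (norm (f \<omega>))\<^sup>2 \<le> h \<omega>"
  shows "square_integrable N f"
  unfolding square_integrable_def
proof (rule Bochner_Integration.integrable_bound[OF assms(2)])
  show "(\<lambda>\<omega>. (norm (f \<omega>))\<^sup>2) \<in> borel_measurable N"
    using assms(1) by measurable
  show "AE \<omega> in N. norm ((norm (f \<omega>))\<^sup>2) \<le> norm (h \<omega>)"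
    using assms(3) by (auto intro!: AE_I2 order_trans[OF _ abs_ge_self])
qed

lemma (in finite_measure) square_integrable_const: "square_integrable M (\<lambda>_. c)"
  by (simp add: square_integrable_def)

lemma square_integrable_add:
  fixes f g :: "'a \<Rightarrow> 'b::euclidean_space"
  assumes [measurable]: "f \<in> borel_measurable N" "g \<in> borel_measurable N"
    and "square_integrable N f" "square_integrable N g"
  shows "square_integrable N (\<lambda>\<omega>. f \<omega> + g \<omega>)"
  by (rule square_integrable_bound[where h = "\<lambda>\<omega>. 2 * (norm (f \<omega>))\<^sup>2 + 2 * (norm (g \<omega>))\<^sup>2"])
    (use assms(3,4) in \<open>auto simp: square_integrable_def intro: norm_add_sq_le\<close>)

lemma square_integrable_scaleR:
  "square_integrable N f \<Longrightarrow> square_integrable N (\<lambda>\<omega>. c *\<^sub>R f \<omega>)"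
  by (simp add: square_integrable_def power_mult_distrib)

lemma square_integrable_matrix_mult:
  fixes f :: "'a \<Rightarrow> real^'p^'n"
  assumes "f \<in> borel_measurable N" "square_integrable N f"
  shows "square_integrable N (\<lambda>\<omega>. (A::real^'n^'n) ** f \<omega>)"
  by (rule square_integrable_bound[where h = "\<lambda>\<omega>. spec_sq A * (norm (f \<omega>))\<^sup>2"])
    (use assms in \<open>auto simp: square_integrable_def norm_matrix_mult_sq_le\<close>)

lemma square_integrable_vec_lambda:
  fixes f :: "'n::finite \<Rightarrow> 'a \<Rightarrow> 'b::euclidean_space"
  assumes "\<And>i. square_integrable N (f i)"
  shows "square_integrable N (\<lambda>\<omega>. \<chi> i. f i \<omega>)"
  using assms by (simp add: square_integrable_def norm_vec_sq)

lemma square_integrable_dev: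
  fixes f :: "'a \<Rightarrow> real^'p^'n"
  assumes "f \<in> borel_measurable N" "square_integrable N f"
  shows "square_integrable N (\<lambda>\<omega>. dev (f \<omega>))"
proof (rule square_integrable_bound[where h = "\<lambda>\<omega>. (norm (f \<omega>))\<^sup>2"])
  show "(\<lambda>\<omega>. dev (f \<omega>)) \<in> borel_measurable N"
    using assms(1) unfolding dev_eq by measurable
qed (use assms(2) in \<open>auto simp: square_integrable_def norm_dev_le power_mono\<close>)

section \<open>Independent samples and oracle noise\<close>

lemma (in prob_space) indep_set_vimage_measurable:
  assumes ind: "indep_var N1 R1 N2 R2"
    and U: "U \<in> measurable (vimage_algebra (space M) R1 N1) N1'"
    and V: "V \<in> measurable (vimage_algebra (space M) R2 N2) N2'"
  shows "indep_set (sigma_sets (space M) {U -` A \<inter> space M | A. A \<in> sets N1'})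
      (sigma_sets (space M) {V -` A \<inter> space M | A. A \<in> sets N2'})"
proof -
  have generated_le: "{F -` A \<inter> space M | A. A \<in> sets N'} \<subseteq> {R -` A \<inter> space M | A. A \<in> sets N}"
    if R: "random_variable N R" and F: "F \<in> measurable (vimage_algebra (space M) R N) N'"
    for F R N N'
  proof safe
    fix A assume "A \<in> sets N'"
    have "F -` A \<inter> space (vimage_algebra (space M) R N) \<in> sets (vimage_algebra (space M) R N)"
      using F \<open>A \<in> sets N'\<close> by (rule measurable_sets)
    then show "\<exists>B. F -` A \<inter> space M = R -` B \<inter> space M \<and> B \<in> sets N"
      using R by (auto simp: sets_vimage_algebra2 measurable_def)
  qed
  have R1: "random_variable N1 R1" and R2: "random_variable N2 R2"
    using ind by (auto simp: indep_var_eq)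
  have "indep_set (sigma_sets (space M) {R1 -` A \<inter> space M | A. A \<in> sets N1})
      (sigma_sets (space M) {R2 -` A \<inter> space M | A. A \<in> sets N2})"
    using ind by (simp add: indep_var_eq)
  then show ?thesis
    unfolding indep_set_def
    by (rule indep_sets_mono_sets)
      (use sigma_sets_subseteq[OF generated_le[OF R1 U]] sigma_sets_subseteq[OF generated_le[OF R2 V]]
        in \<open>auto split: bool.split\<close>)
qed

text \<open>Stated for the joint distribution rather than as an independence statement because
  \<open>indep_var\<close> requires both random variables to have the same codomain type.\<close>
lemma (in prob_space) distr_pair_vimage_measurable:
  assumes ind: "indep_var N1 R1 N2 R2"
    and U: "U \<in> measurable (vimage_algebra (space M) R1 N1) N1'"
    and V: "V \<in> measurable (vimage_algebra (space M) R2 N2) N2'"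
  shows "distr M N1' U \<Otimes>\<^sub>M distr M N2' V = distr M (N1' \<Otimes>\<^sub>M N2') (\<lambda>\<omega>. (U \<omega>, V \<omega>))"
proof -
  have subalgebra: "subalgebra M (vimage_algebra (space M) R N)" if "random_variable N R" for R N
    using that by (auto simp: subalgebra_def sets_vimage_algebra2 measurable_def)
  have U_rv: "random_variable N1' U" and V_rv: "random_variable N2' V"
    using ind measurable_from_subalg[OF subalgebra U] measurable_from_subalg[OF subalgebra V]
    by (auto simp: indep_var_eq)
  interpret U: prob_space "distr M N1' U" by (rule prob_space_distr) fact
  interpret V: prob_space "distr M N2' V" by (rule prob_space_distr) fact
  interpret UV: pair_prob_space "distr M N1' U" "distr M N2' V" ..
  show ?thesis
  proof (rule pair_measure_eqI)
    fix A B assume A: "A \<in> sets (distr M N1' U)" and B: "B \<in> sets (distr M N2' V)"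
    have "U -` A \<inter> space M \<in> sigma_sets (space M) {U -` A \<inter> space M | A. A \<in> sets N1'}"
      "V -` B \<inter> space M \<in> sigma_sets (space M) {V -` A \<inter> space M | A. A \<in> sets N2'}"
      using A B by (auto intro: sigma_sets.Basic)
    then have "emeasure M ((U -` A \<inter> space M) \<inter> (V -` B \<inter> space M))
        = emeasure M (U -` A \<inter> space M) * emeasure M (V -` B \<inter> space M)"
      using indep_setD[OF indep_set_vimage_measurable[OF ind U V]]
      by (simp add: emeasure_eq_measure measure_nonneg ennreal_mult)
    moreover have "(\<lambda>\<omega>. (U \<omega>, V \<omega>)) -` (A \<times> B) \<inter> space M = (U -` A \<inter> space M) \<inter> (V -` B \<inter> space M)"
      by auto
    ultimately show "emeasure (distr M N1' U) A * emeasure (distr M N2' V) B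
        = emeasure (distr M (N1' \<Otimes>\<^sub>M N2') (\<lambda>\<omega>. (U \<omega>, V \<omega>))) (A \<times> B)"
      using U_rv V_rv A B by (simp add: emeasure_distr measurable_Pair)
  qed (simp_all add: U.sigma_finite_measure V.sigma_finite_measure)
qed

locale stochastic_gradients = prob_space M
  for M :: "'a measure"
  and D :: "'n::finite \<Rightarrow> 's measure"
  and \<xi> :: "nat \<Rightarrow> 'n \<Rightarrow> 'a \<Rightarrow> 's"
  and gf :: "'n \<Rightarrow> real^'p::finite \<Rightarrow> real^'p"
  and g :: "'n \<Rightarrow> real^'p \<Rightarrow> 's \<Rightarrow> real^'p"
  and L \<sigma> :: real +
  assumes distr_sample: "\<And>t i. distr M (D i) (\<xi> t i) = D i"
    and indep_samples: "indep_vars (\<lambda>(t, i). D i) (\<lambda>(t, i). \<xi> t i) UNIV"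
    and g_measurable: "\<And>i. (\<lambda>(z, s). g i z s) \<in> borel_measurable (borel \<Otimes>\<^sub>M D i)"
    and gf_lipschitz: "\<And>i u v. norm (gf i u - gf i v) \<le> L * norm (u - v)"
    and unbiased: "\<And>i z. integrable (D i) (g i z) \<and> (\<integral>s. g i z s \<partial>D i) = gf i z"
    and variance: "\<And>i z. integrable (D i) (\<lambda>s. (norm (g i z s - gf i z))\<^sup>2) \<and>
                  (\<integral>s. (norm (g i z s - gf i z))\<^sup>2 \<partial>D i) \<le> \<sigma>\<^sup>2"
begin

definition samples_on :: "(nat \<times> 'n) set \<Rightarrow> 'a \<Rightarrow> (nat \<times> 'n) \<Rightarrow> 's" where
  "samples_on K \<omega> = restrict (\<lambda>ti. (\<lambda>(t, i). \<xi> t i) ti \<omega>) K"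

definition sample_algebra :: "(nat \<times> 'n) set \<Rightarrow> 'a measure" where
  "sample_algebra K = vimage_algebra (space M) (samples_on K) (PiM K (\<lambda>(t, i). D i))"

lemma sample_measurable [measurable]: "\<xi> t i \<in> measurable M (D i)"
  using indep_samples unfolding indep_vars_def by (auto dest: bspec[of _ _ "(t, i)"])

lemma samples_on_measurable: "samples_on K \<in> measurable M (PiM K (\<lambda>(t, i). D i))"
  unfolding samples_on_def by (intro measurable_restrict) auto

lemma samples_on_space: "samples_on K \<in> space M \<rightarrow> space (PiM K (\<lambda>(t, i). D i))"
  using measurable_space[OF samples_on_measurable] by blast

lemma prob_space_D: "prob_space (D i)"
  using prob_space_distr[OF sample_measurable[of 0 i]] distr_sample[of i 0] by simp

lemma space_sample_algebra [simp]: "space (sample_algebra K) = space M"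
  by (simp add: sample_algebra_def)

lemma sample_measurable_sample_algebra:
  assumes "(s, j) \<in> K"
  shows "\<xi> s j \<in> measurable (sample_algebra K) (D j)"
proof -
  have "(\<lambda>\<omega>. samples_on K \<omega> (s, j)) \<in> measurable (sample_algebra K) (D j)"
    unfolding sample_algebra_def
    using measurable_compose[OF measurable_vimage_algebra1[OF samples_on_space]
        measurable_component_singleton[OF assms]]
    by simp
  then show ?thesis
    using assms by (simp add: samples_on_def)
qed

lemma subalgebra_sample_algebra: "subalgebra M (sample_algebra K)"
  using samples_on_measurable
  by (auto simp: subalgebra_def sample_algebra_def sets_vimage_algebra2[OF samples_on_space]
      measurable_def)

lemma measurable_from_sample_algebra: "f \<in> measurable (sample_algebra K) N \<Longrightarrow> f \<in> measurable M N"
  by (rule measurable_from_subalg[OF subalgebra_sample_algebra])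

lemma distr_pair_fresh_sample:
  assumes "(t, i) \<notin> K" and Z: "Z \<in> measurable (sample_algebra K) N"
  shows "distr M N Z \<Otimes>\<^sub>M D i = distr M (N \<Otimes>\<^sub>M D i) (\<lambda>\<omega>. (Z \<omega>, \<xi> t i \<omega>))"
proof -
  have indep: "indep_var (PiM K (\<lambda>(t, i). D i)) (samples_on K)
      (PiM {(t, i)} (\<lambda>(t, i). D i)) (samples_on {(t, i)})"
    unfolding samples_on_def using assms(1) by (intro indep_var_restrict[OF indep_samples]) auto
  have "\<xi> t i \<in> measurable (sample_algebra {(t, i)}) (D i)"
    by (rule sample_measurable_sample_algebra) simp
  from distr_pair_vimage_measurable[OF indep Z[unfolded sample_algebra_def]
      this[unfolded sample_algebra_def]]
  show ?thesis
    by (simp add: distr_sample)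
qed

lemma nn_integral_fresh_sample:
  fixes Z :: "'a \<Rightarrow> 'b::topological_space" and h :: "'b \<times> 's \<Rightarrow> ennreal"
  assumes "(t, i) \<notin> K" "Z \<in> borel_measurable (sample_algebra K)"
    and [measurable]: "h \<in> borel_measurable (borel \<Otimes>\<^sub>M D i)"
  shows "(\<integral>\<^sup>+\<omega>. h (Z \<omega>, \<xi> t i \<omega>) \<partial>M) = (\<integral>\<^sup>+z. \<integral>\<^sup>+s. h (z, s) \<partial>D i \<partial>distr M borel Z)"
proof -
  have [measurable]: "Z \<in> borel_measurable M"
    using assms(2) by (rule measurable_from_sample_algebra)
  interpret D: prob_space "D i" by (rule prob_space_D)
  have "(\<integral>\<^sup>+\<omega>. h (Z \<omega>, \<xi> t i \<omega>) \<partial>M) = (\<integral>\<^sup>+p. h p \<partial>(distr M borel Z \<Otimes>\<^sub>M D i))"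
    by (simp add: distr_pair_fresh_sample[OF assms(1,2)] nn_integral_distr)
  also have "\<dots> = (\<integral>\<^sup>+z. \<integral>\<^sup>+s. h (z, s) \<partial>D i \<partial>distr M borel Z)"
    by (rule D.nn_integral_fst[symmetric]) measurable
  finally show ?thesis .
qed

lemma integral_fresh_sample:
  fixes Z :: "'a \<Rightarrow> 'b::topological_space" and h :: "'b \<times> 's \<Rightarrow> real"
  assumes "(t, i) \<notin> K" "Z \<in> borel_measurable (sample_algebra K)"
    and [measurable]: "h \<in> borel_measurable (borel \<Otimes>\<^sub>M D i)"
    and "integrable M (\<lambda>\<omega>. h (Z \<omega>, \<xi> t i \<omega>))"
  shows "(\<integral>\<omega>. h (Z \<omega>, \<xi> t i \<omega>) \<partial>M) = (\<integral>z. \<integral>s. h (z, s) \<partial>D i \<partial>distr M borel Z)"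
proof -
  have [measurable]: "Z \<in> borel_measurable M"
    using assms(2) by (rule measurable_from_sample_algebra)
  interpret Z: prob_space "distr M borel Z" by (rule prob_space_distr) simp
  interpret D: prob_space "D i" by (rule prob_space_D)
  interpret ZD: pair_sigma_finite "distr M borel Z" "D i" by unfold_locales
  note joint = distr_pair_fresh_sample[OF assms(1,2)]
  have "integrable (distr M borel Z \<Otimes>\<^sub>M D i) h"
    unfolding joint using assms(4) by (subst integrable_distr_eq) simp_all
  moreover have "(\<integral>\<omega>. h (Z \<omega>, \<xi> t i \<omega>) \<partial>M) = (\<integral>p. h p \<partial>(distr M borel Z \<Otimes>\<^sub>M D i))"
    unfolding joint by (subst integral_distr) simp_all
  ultimately show ?thesis
    by (simp add: ZD.integral_fst')
qed

lemma gf_measurable [measurable]: "gf i \<in> borel_measurable borel"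
proof -
  have "\<bar>L\<bar>-lipschitz_on UNIV (gf i)"
    by (rule lipschitz_onI)
      (use gf_lipschitz[of i] in \<open>auto simp: dist_norm intro: order_trans[OF _ mult_right_mono[OF abs_ge_self]]\<close>)
  then show ?thesis
    by (intro borel_measurable_continuous_onI lipschitz_on_continuous_on)
qed

lemma g_measurable_pair [measurable]: "(\<lambda>p. g i (fst p) (snd p)) \<in> borel_measurable (borel \<Otimes>\<^sub>M D i)"
  using g_measurable[of i] by (simp add: case_prod_beta')

lemma g_measurable_comp [measurable (raw)]:
  assumes "f \<in> borel_measurable N" "u \<in> measurable N (D i)"
  shows "(\<lambda>x. g i (f x) (u x)) \<in> borel_measurable N"
  using measurable_compose[OF measurable_Pair[OF assms] g_measurable_pair[of i]] by simp

lemma oracle_noise_second_moment: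
  assumes "(t, i) \<notin> K" and Z: "Z \<in> borel_measurable (sample_algebra K)"
  shows "integrable M (\<lambda>\<omega>. (norm (g i (Z \<omega>) (\<xi> t i \<omega>) - gf i (Z \<omega>)))\<^sup>2)" (is "integrable M ?f")
    and "(\<integral>\<omega>. (norm (g i (Z \<omega>) (\<xi> t i \<omega>) - gf i (Z \<omega>)))\<^sup>2 \<partial>M) \<le> \<sigma>\<^sup>2"
proof -
  have [measurable]: "Z \<in> borel_measurable M"
    using Z by (rule measurable_from_sample_algebra)
  interpret Z: prob_space "distr M borel Z" by (rule prob_space_distr) simp
  have "(\<integral>\<^sup>+\<omega>. ennreal (?f \<omega>) \<partial>M)
      = (\<integral>\<^sup>+z. \<integral>\<^sup>+s. ennreal ((norm (g i z s - gf i z))\<^sup>2) \<partial>D i \<partial>distr M borel Z)"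
    using nn_integral_fresh_sample[OF assms,
        of "\<lambda>p. ennreal ((norm (g i (fst p) (snd p) - gf i (fst p)))\<^sup>2)"]
    by simp
  also have "\<dots> \<le> (\<integral>\<^sup>+z. ennreal (\<sigma>\<^sup>2) \<partial>distr M borel Z)"
  proof (rule nn_integral_mono)
    fix z
    have "(\<integral>\<^sup>+s. ennreal ((norm (g i z s - gf i z))\<^sup>2) \<partial>D i)
        = ennreal (\<integral>s. (norm (g i z s - gf i z))\<^sup>2 \<partial>D i)"
      using variance[of i z] by (intro nn_integral_eq_integral) auto
    also have "\<dots> \<le> ennreal (\<sigma>\<^sup>2)"
      using variance[of i z] by (intro ennreal_leI) simp
    finally show "(\<integral>\<^sup>+s. ennreal ((norm (g i z s - gf i z))\<^sup>2) \<partial>D i) \<le> ennreal (\<sigma>\<^sup>2)" .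
  qed
  also have "\<dots> = ennreal (\<sigma>\<^sup>2)"
    using Z.emeasure_space_1 by simp
  finally have bound: "(\<integral>\<^sup>+\<omega>. ennreal (?f \<omega>) \<partial>M) \<le> ennreal (\<sigma>\<^sup>2)" .
  show int: "integrable M ?f"
    using bound by (intro integrableI_bounded) (auto simp: top.not_eq_extremum le_less_trans)
  have "ennreal (\<integral>\<omega>. ?f \<omega> \<partial>M) \<le> ennreal (\<sigma>\<^sup>2)"
    using bound by (subst nn_integral_eq_integral[OF int, symmetric]) auto
  then show "(\<integral>\<omega>. ?f \<omega> \<partial>M) \<le> \<sigma>\<^sup>2"
    by (auto simp: ennreal_le_iff2)
qed

lemma oracle_noise_inner_integrable:
  assumes "(t, i) \<notin> K" and Z: "Z \<in> borel_measurable (sample_algebra K)"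
    and [measurable]: "a \<in> borel_measurable M" and "square_integrable M a"
  shows "integrable M (\<lambda>\<omega>. a \<omega> \<bullet> (g i (Z \<omega>) (\<xi> t i \<omega>) - gf i (Z \<omega>)))"
proof (rule Bochner_Integration.integrable_bound)
  have [measurable]: "Z \<in> borel_measurable M"
    using Z by (rule measurable_from_sample_algebra)
  show "(\<lambda>\<omega>. a \<omega> \<bullet> (g i (Z \<omega>) (\<xi> t i \<omega>) - gf i (Z \<omega>))) \<in> borel_measurable M"
    by measurable
  show "integrable M (\<lambda>\<omega>. (norm (a \<omega>))\<^sup>2 + (norm (g i (Z \<omega>) (\<xi> t i \<omega>) - gf i (Z \<omega>)))\<^sup>2)"
    using assms(4) oracle_noise_second_moment(1)[OF assms(1) Z]
    by (auto simp: square_integrable_def)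
qed (simp add: abs_inner_le_norm_sq_add)

lemma oracle_noise_uncorrelated:
  assumes "(t, i) \<notin> K" and Z: "Z \<in> borel_measurable (sample_algebra K)"
    and a: "a \<in> borel_measurable (sample_algebra K)" "square_integrable M a"
  shows "(\<integral>\<omega>. a \<omega> \<bullet> (g i (Z \<omega>) (\<xi> t i \<omega>) - gf i (Z \<omega>)) \<partial>M) = 0"
proof -
  let ?h = "\<lambda>p. fst (fst p) \<bullet> (g i (snd (fst p)) (snd p) - gf i (snd (fst p)))"
  have aZ: "(\<lambda>\<omega>. (a \<omega>, Z \<omega>)) \<in> borel_measurable (sample_algebra K)"
    using a(1) Z by (rule borel_measurable_Pair)
  have [measurable]: "Z \<in> borel_measurable M" "a \<in> borel_measurable M"
    using Z a(1) by (auto intro: measurable_from_sample_algebra)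
  have [measurable]:
    "(\<lambda>p::((real^'p) \<times> (real^'p)) \<times> 's. fst (fst p)) \<in> borel_measurable (borel \<Otimes>\<^sub>M D i)"
    "(\<lambda>p::((real^'p) \<times> (real^'p)) \<times> 's. snd (fst p)) \<in> borel_measurable (borel \<Otimes>\<^sub>M D i)"
    by (rule measurable_compose[OF measurable_fst borel_measurable_continuous_onI],
        intro continuous_intros)+
  have "(\<integral>\<omega>. a \<omega> \<bullet> (g i (Z \<omega>) (\<xi> t i \<omega>) - gf i (Z \<omega>)) \<partial>M)
      = (\<integral>w. \<integral>s. ?h (w, s) \<partial>D i \<partial>distr M borel (\<lambda>\<omega>. (a \<omega>, Z \<omega>)))"
    using integral_fresh_sample[OF assms(1) aZ, of ?h]
      oracle_noise_inner_integrable[OF assms(1) Z _ a(2)]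
    by simp
  also have "\<dots> = (\<integral>w. 0 \<partial>distr M borel (\<lambda>\<omega>. (a \<omega>, Z \<omega>)))"
  proof (rule Bochner_Integration.integral_cong[OF refl])
    fix w :: "(real^'p) \<times> (real^'p)"
    interpret D: prob_space "D i" by (rule prob_space_D)
    have "integrable (D i) (\<lambda>s. g i (snd w) s - gf i (snd w))"
      using unbiased[of i "snd w"] by auto
    then show "(\<integral>s. ?h (w, s) \<partial>D i) = 0"
      using unbiased[of i "snd w"] by (simp add: D.prob_space)
  qed
  finally show ?thesis
    by simp
qed

end

section \<open>The FlexGT recursion\<close>

definition mixing_closed :: "real^'n^'n \<Rightarrow> (('a \<Rightarrow> real^'p^'n) \<Rightarrow> bool) \<Rightarrow> bool" where
  "mixing_closed A P \<longleftrightarrow> (\<forall>c. P (\<lambda>_. c)) \<and> (\<forall>f h. P f \<longrightarrow> P h \<longrightarrow> P (\<lambda>\<omega>. f \<omega> + h \<omega>))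
     \<and> (\<forall>c f. P f \<longrightarrow> P (\<lambda>\<omega>. c *\<^sub>R f \<omega>)) \<and> (\<forall>f. P f \<longrightarrow> P (\<lambda>\<omega>. A ** f \<omega>))"

context
  fixes A :: "real^'n^'n" and P :: "('a \<Rightarrow> real^'p^'n) \<Rightarrow> bool"
  assumes closed: "mixing_closed A P"
begin

lemma mixing_closed_const: "P (\<lambda>_. c)"
  and mixing_closed_add: "P f \<Longrightarrow> P h \<Longrightarrow> P (\<lambda>\<omega>. f \<omega> + h \<omega>)"
  and mixing_closed_scaleR: "P f \<Longrightarrow> P (\<lambda>\<omega>. r *\<^sub>R f \<omega>)"
  and mixing_closed_mult: "P f \<Longrightarrow> P (\<lambda>\<omega>. A ** f \<omega>)"
  using closed by (simp_all add: mixing_closed_def)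

lemma mixing_closed_diff:
  assumes "P f" "P h"
  shows "P (\<lambda>\<omega>. f \<omega> - h \<omega>)"
proof -
  have "P (\<lambda>\<omega>. f \<omega> + (- 1) *\<^sub>R h \<omega>)"
    using assms by (intro mixing_closed_add mixing_closed_scaleR)
  then show ?thesis
    by simp
qed

lemma mixing_closed_sum: "(\<And>j. j \<in> S \<Longrightarrow> P (f j)) \<Longrightarrow> P (\<lambda>\<omega>. \<Sum>j\<in>S. f j \<omega>)"
proof (induction S rule: infinite_finite_induct)
  case (insert j S)
  then show ?case
    using mixing_closed_add[of "f j" "\<lambda>\<omega>. \<Sum>j\<in>S. f j \<omega>"] by simp
qed (simp_all add: mixing_closed_const)

end

lemma mixing_closed_measurable: "mixing_closed A (\<lambda>f. f \<in> borel_measurable N)"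
  by (simp add: mixing_closed_def)

lemma (in finite_measure) mixing_closed_square_integrable:
  "mixing_closed A (\<lambda>f. f \<in> borel_measurable M \<and> square_integrable M f)"
  by (simp add: mixing_closed_def square_integrable_const square_integrable_add
      square_integrable_scaleR square_integrable_matrix_mult borel_measurable_matrix_mult
      borel_measurable_add borel_measurable_scaleR)

locale flexgt = stochastic_gradients M D \<xi> gf g L \<sigma>
  for M :: "'a measure"
  and D :: "'n::finite \<Rightarrow> 's measure"
  and \<xi> :: "nat \<Rightarrow> 'n \<Rightarrow> 'a \<Rightarrow> 's"
  and gf :: "'n \<Rightarrow> real^'p::finite \<Rightarrow> real^'p"
  and g :: "'n \<Rightarrow> real^'p \<Rightarrow> 's \<Rightarrow> real^'p"
  and L \<sigma> :: real +
  fixes Wbar :: "real^'n^'n" and \<gamma> :: real and \<beta> :: nat and x0 :: "real^'p^'n"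
    and x y :: "nat \<Rightarrow> 'a \<Rightarrow> real^'p^'n"
  assumes Wbar_preserves_average: "preserves_average Wbar"
    and rho_lt_1: "spec_sq (Wbar - avgJ) < 1"
    and beta_pos: "1 \<le> \<beta>"
    and x_init: "\<And>\<omega>. x 0 \<omega> = x0"
    and y_init: "\<And>\<omega>. y 0 \<omega> = (\<chi> i. g i (x 0 \<omega> $ i) (\<xi> 0 i \<omega>))"
    and x_inner: "\<And>k j \<omega>. j + 2 \<le> \<beta> \<Longrightarrow>
       x (\<beta> * k + j + 1) \<omega> = x (\<beta> * k + j) \<omega> - \<gamma> *\<^sub>R y (\<beta> * k + j) \<omega>"
    and y_inner: "\<And>k j \<omega>. j + 2 \<le> \<beta> \<Longrightarrow>
       y (\<beta> * k + j + 1) \<omega> = y (\<beta> * k + j) \<omega>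
         + (\<chi> i. g i (x (\<beta> * ((\<beta> * k + j + 1) div \<beta>)) \<omega> $ i) (\<xi> (\<beta> * k + j + 1) i \<omega>))
         - (\<chi> i. g i (x (\<beta> * ((\<beta> * k + j) div \<beta>)) \<omega> $ i) (\<xi> (\<beta> * k + j) i \<omega>))"
    and x_round: "\<And>k \<omega>.
       x (\<beta> * (k + 1)) \<omega> = Wbar ** (x (\<beta> * k) \<omega> - \<gamma> *\<^sub>R (\<Sum>j<\<beta>. y (\<beta> * k + j) \<omega>))"
    and y_round: "\<And>k \<omega>.
       y (\<beta> * (k + 1)) \<omega> = Wbar ** (y (\<beta> * k) \<omega>
         + (\<chi> i. g i (x (\<beta> * ((\<beta> * (k + 1)) div \<beta>)) \<omega> $ i) (\<xi> (\<beta> * (k + 1)) i \<omega>))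
         - (\<chi> i. g i (x (\<beta> * ((\<beta> * k) div \<beta>)) \<omega> $ i) (\<xi> (\<beta> * k) i \<omega>)))"
begin

abbreviation rho :: real where
  "rho \<equiv> spec_sq (Wbar - avgJ)"

definition stoch_grad :: "nat \<Rightarrow> 'a \<Rightarrow> real^'p^'n" where
  "stoch_grad t \<omega> = (\<chi> i. g i (x (\<beta> * (t div \<beta>)) \<omega> $ i) (\<xi> t i \<omega>))"

definition grad_noise :: "nat \<Rightarrow> 'n \<Rightarrow> 'a \<Rightarrow> real^'p" where
  "grad_noise t i \<omega> = g i (x (\<beta> * (t div \<beta>)) \<omega> $ i) (\<xi> t i \<omega>) - gf i (x (\<beta> * (t div \<beta>)) \<omega> $ i)"

definition noise :: "nat \<Rightarrow> 'a \<Rightarrow> real^'p^'n" where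
  "noise t \<omega> = (\<chi> i. grad_noise t i \<omega>)"

lemma stoch_grad_eq_noise: "stoch_grad t \<omega> = (\<chi> i. gf i (x (\<beta> * (t div \<beta>)) \<omega> $ i)) + noise t \<omega>"
  by (simp add: stoch_grad_def noise_def grad_noise_def vec_eq_iff)

lemma y_init_stoch_grad: "y 0 = stoch_grad 0"
  by (simp add: stoch_grad_def y_init fun_eq_iff)

lemma y_inner_stoch_grad:
  "j + 2 \<le> \<beta> \<Longrightarrow>
    y (\<beta> * k + j + 1) \<omega> = y (\<beta> * k + j) \<omega> + stoch_grad (\<beta> * k + j + 1) \<omega> - stoch_grad (\<beta> * k + j) \<omega>"
  unfolding stoch_grad_def by (rule y_inner)

lemma y_round_stoch_grad:
  "y (\<beta> * (k + 1)) \<omega> = Wbar ** (y (\<beta> * k) \<omega> + stoch_grad (\<beta> * (k + 1)) \<omega> - stoch_grad (\<beta> * k) \<omega>)"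
  unfolding stoch_grad_def by (rule y_round)

lemma snapshot_le: "\<beta> * (t div \<beta>) \<le> t"
  by (rule times_div_less_eq_dividend)

lemma iteration_cases:
  obtains "t = 0"
  | k j where "j + 2 \<le> \<beta>" "t = \<beta> * k + j + 1"
  | k where "t = \<beta> * (k + 1)"
proof (cases t)
  case (Suc s)
  define k j where "k = s div \<beta>" and "j = s mod \<beta>"
  have t: "t = \<beta> * k + j + 1"
    using Suc by (simp add: k_def j_def)
  have "j < \<beta>"
    using beta_pos by (simp add: j_def)
  then consider "j + 2 \<le> \<beta>" | "j + 1 = \<beta>"
    by linarith
  then show ?thesis
  proof cases
    case 1
    then show ?thesis using that(2) t by blast
  next
    case 2
    then have "t = \<beta> * (k + 1)"
      using t by (simp add: algebra_simps)
    then show ?thesis using that(3) by blast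
  qed
qed (use that(1) in simp)

lemma x_closed_step:
  assumes P: "mixing_closed Wbar P" and "\<And>s. s < t \<Longrightarrow> P (x s)" "\<And>s. s < t \<Longrightarrow> P (y s)"
  shows "P (x t)"
proof (cases t rule: iteration_cases)
  case 1
  then show ?thesis
    using mixing_closed_const[OF P, of x0] by (simp add: x_init[abs_def])
next
  case (2 k j)
  then have "x t = (\<lambda>\<omega>. x (\<beta> * k + j) \<omega> - \<gamma> *\<^sub>R y (\<beta> * k + j) \<omega>)"
    using x_inner by auto
  then show ?thesis
    using 2 assms by (auto intro!: mixing_closed_diff[OF P] mixing_closed_scaleR[OF P])
next
  case (3 k)
  then have "x t = (\<lambda>\<omega>. Wbar ** (x (\<beta> * k) \<omega> - \<gamma> *\<^sub>R (\<Sum>j<\<beta>. y (\<beta> * k + j) \<omega>)))"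
    using x_round by auto
  then show ?thesis
    using 3 assms beta_pos
    by (auto intro!: mixing_closed_mult[OF P] mixing_closed_diff[OF P] mixing_closed_scaleR[OF P]
        mixing_closed_sum[OF P])
qed

lemma y_closed_step:
  assumes P: "mixing_closed Wbar P" and "\<And>s. s < t \<Longrightarrow> P (y s)" "\<And>s. s \<le> t \<Longrightarrow> P (stoch_grad s)"
  shows "P (y t)"
proof (cases t rule: iteration_cases)
  case 1
  then show ?thesis
    using assms(3)[of 0] by (simp add: y_init_stoch_grad)
next
  case (2 k j)
  then have "y t = (\<lambda>\<omega>. y (\<beta> * k + j) \<omega> + stoch_grad (\<beta> * k + j + 1) \<omega> - stoch_grad (\<beta> * k + j) \<omega>)"
    using y_inner_stoch_grad by auto
  then show ?thesis
    using 2 assms by (auto intro!: mixing_closed_diff[OF P] mixing_closed_add[OF P])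
next
  case (3 k)
  then have "y t = (\<lambda>\<omega>. Wbar ** (y (\<beta> * k) \<omega> + stoch_grad (\<beta> * (k + 1)) \<omega> - stoch_grad (\<beta> * k) \<omega>))"
    using y_round_stoch_grad by auto
  then show ?thesis
    using 3 assms beta_pos
    by (auto intro!: mixing_closed_mult[OF P] mixing_closed_diff[OF P] mixing_closed_add[OF P])
qed

text \<open>The two bounds differ because \<open>x t\<close> depends only on the samples drawn before time \<open>t\<close>,
  while \<open>y t\<close> also depends on those drawn at time \<open>t\<close>.\<close>
lemma iterates_closed:
  assumes P: "mixing_closed Wbar P"
    and grad: "\<And>s. s < T \<Longrightarrow> P (x (\<beta> * (s div \<beta>))) \<Longrightarrow> P (stoch_grad s)"
  shows "t \<le> T \<Longrightarrow> P (x t)" and "t < T \<Longrightarrow> P (y t)"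
proof -
  have "(t \<le> T \<longrightarrow> P (x t)) \<and> (t < T \<longrightarrow> P (y t))"
  proof (induction t rule: less_induct)
    case (less t)
    have x_t: "P (x t)" if "t \<le> T"
    proof (rule x_closed_step[OF P])
      show "P (x s)" "P (y s)" if "s < t" for s
        using less that \<open>t \<le> T\<close> by auto
    qed
    have x_le_t: "P (x s)" if "s \<le> t" "t \<le> T" for s
      using less x_t that by (cases "s = t") auto
    have "P (y t)" if "t < T"
    proof (rule y_closed_step[OF P])
      show "P (y s)" if "s < t" for s
        using less that \<open>t < T\<close> by auto
      show "P (stoch_grad s)" if "s \<le> t" for s
      proof (rule grad)
        show "s < T"
          using that \<open>t < T\<close> by simp
        show "P (x (\<beta> * (s div \<beta>)))"
          using that \<open>t < T\<close> snapshot_le[of s] by (intro x_le_t) linarith+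
      qed
    qed
    with x_t show ?case
      by blast
  qed
  then show "t \<le> T \<Longrightarrow> P (x t)" and "t < T \<Longrightarrow> P (y t)"
    by blast+
qed

lemma stoch_grad_measurable_in:
  assumes "\<And>j. \<xi> s j \<in> measurable N (D j)" "x (\<beta> * (s div \<beta>)) \<in> borel_measurable N"
  shows "stoch_grad s \<in> borel_measurable N"
  using assms unfolding stoch_grad_def by measurable

lemma x_adapted: "(\<And>s j. s < t \<Longrightarrow> (s, j) \<in> K) \<Longrightarrow> x t \<in> borel_measurable (sample_algebra K)"
  by (rule iterates_closed(1)[OF mixing_closed_measurable, where T = t])
    (auto intro!: stoch_grad_measurable_in sample_measurable_sample_algebra)

lemma y_adapted: "(\<And>s j. s \<le> t \<Longrightarrow> (s, j) \<in> K) \<Longrightarrow> y t \<in> borel_measurable (sample_algebra K)"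
  by (rule iterates_closed(2)[OF mixing_closed_measurable, where T = "Suc t"])
    (auto intro!: stoch_grad_measurable_in sample_measurable_sample_algebra)

lemma snapshot_adapted:
  assumes "\<And>s j. s < t \<Longrightarrow> (s, j) \<in> K"
  shows "x (\<beta> * (t div \<beta>)) \<in> borel_measurable (sample_algebra K)"
  using assms less_le_trans[OF _ snapshot_le] by (intro x_adapted) blast

lemma x_measurable [measurable]: "x t \<in> borel_measurable M"
  using x_adapted[of t UNIV] by (simp add: measurable_from_sample_algebra)

lemma y_measurable [measurable]: "y t \<in> borel_measurable M"
  using y_adapted[of t UNIV] by (simp add: measurable_from_sample_algebra)

lemma grad_noise_adapted:
  assumes "\<And>s j. s \<le> t \<Longrightarrow> (s, j) \<in> K"
  shows "grad_noise t i \<in> borel_measurable (sample_algebra K)"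
proof -
  have [measurable]: "x (\<beta> * (t div \<beta>)) \<in> borel_measurable (sample_algebra K)"
    using assms by (intro snapshot_adapted) simp
  have [measurable]: "\<xi> t i \<in> measurable (sample_algebra K) (D i)"
    using assms by (intro sample_measurable_sample_algebra) simp
  show ?thesis
    unfolding grad_noise_def by measurable
qed

lemma grad_noise_measurable [measurable]: "grad_noise t i \<in> borel_measurable M"
  using grad_noise_adapted[of t UNIV i] by (simp add: measurable_from_sample_algebra)

lemma noise_measurable [measurable]: "noise t \<in> borel_measurable M"
  unfolding noise_def by measurable

lemma grad_noise_second_moment:
  shows "square_integrable M (grad_noise t i)"
    and "(\<integral>\<omega>. (norm (grad_noise t i \<omega>))\<^sup>2 \<partial>M) \<le> \<sigma>\<^sup>2"
proof -
  have "x (\<beta> * (t div \<beta>)) \<in> borel_measurable (sample_algebra {(s, j). s < t})"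
    by (intro snapshot_adapted) simp
  then have "(\<lambda>\<omega>. x (\<beta> * (t div \<beta>)) \<omega> $ i) \<in> borel_measurable (sample_algebra {(s, j). s < t})"
    by measurable
  from oracle_noise_second_moment[OF _ this, of t]
  show "square_integrable M (grad_noise t i)" "(\<integral>\<omega>. (norm (grad_noise t i \<omega>))\<^sup>2 \<partial>M) \<le> \<sigma>\<^sup>2"
    by (simp_all add: square_integrable_def grad_noise_def)
qed

lemma noise_second_moment:
  shows "square_integrable M (noise t)"
    and "(\<integral>\<omega>. (norm (noise t \<omega>))\<^sup>2 \<partial>M) \<le> real CARD('n) * \<sigma>\<^sup>2"
proof -
  show "square_integrable M (noise t)"
    unfolding noise_def by (intro square_integrable_vec_lambda grad_noise_second_moment)
  have "(\<integral>\<omega>. (norm (noise t \<omega>))\<^sup>2 \<partial>M) = (\<Sum>i\<in>UNIV. (\<integral>\<omega>. (norm (grad_noise t i \<omega>))\<^sup>2 \<partial>M))"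
    using grad_noise_second_moment(1)
    by (simp add: noise_def norm_vec_sq square_integrable_def)
  also have "\<dots> \<le> (\<Sum>i\<in>(UNIV::'n set). \<sigma>\<^sup>2)"
    by (intro sum_mono grad_noise_second_moment(2))
  finally show "(\<integral>\<omega>. (norm (noise t \<omega>))\<^sup>2 \<partial>M) \<le> real CARD('n) * \<sigma>\<^sup>2"
    by simp
qed

lemma square_integrable_gf:
  assumes [measurable]: "X \<in> borel_measurable M" and "square_integrable M X"
  shows "square_integrable M (\<lambda>\<omega>. gf i (X \<omega> $ i))"
proof (rule square_integrable_bound)
  show "integrable M (\<lambda>\<omega>. 2 * (norm (gf i 0))\<^sup>2 + 2 * L\<^sup>2 * (norm (X \<omega>))\<^sup>2)"
    using assms(2) by (simp add: square_integrable_def)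
  fix \<omega>
  have "norm (gf i (X \<omega> $ i) - gf i 0) \<le> \<bar>L\<bar> * norm (X \<omega>)"
  proof -
    have "norm (gf i (X \<omega> $ i) - gf i 0) \<le> L * norm (X \<omega> $ i)"
      using gf_lipschitz[of i "X \<omega> $ i" 0] by simp
    also have "\<dots> \<le> \<bar>L\<bar> * norm (X \<omega> $ i)"
      by (intro mult_right_mono) simp_all
    also have "\<dots> \<le> \<bar>L\<bar> * norm (X \<omega>)"
      by (simp add: mult_left_mono Finite_Cartesian_Product.norm_nth_le)
    finally show ?thesis .
  qed
  then have "(norm (gf i (X \<omega> $ i)))\<^sup>2 \<le> (norm (gf i 0) + \<bar>L\<bar> * norm (X \<omega>))\<^sup>2"
    using norm_triangle_sub[of "gf i (X \<omega> $ i)" "gf i 0"] by (intro power_mono) auto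
  also have "\<dots> \<le> 2 * (norm (gf i 0))\<^sup>2 + 2 * (\<bar>L\<bar> * norm (X \<omega>))\<^sup>2"
    using norm_add_sq_le[of "norm (gf i 0)" "\<bar>L\<bar> * norm (X \<omega>)"] by simp
  finally show "(norm (gf i (X \<omega> $ i)))\<^sup>2 \<le> 2 * (norm (gf i 0))\<^sup>2 + 2 * L\<^sup>2 * (norm (X \<omega>))\<^sup>2"
    by (simp add: power_mult_distrib)
qed measurable

lemma iterates_square_integrable:
  shows x_square_integrable: "square_integrable M (x t)"
    and y_square_integrable: "square_integrable M (y t)"
proof -
  have grad: "stoch_grad s \<in> borel_measurable M \<and> square_integrable M (stoch_grad s)"
    if "x (\<beta> * (s div \<beta>)) \<in> borel_measurable M \<and> square_integrable M (x (\<beta> * (s div \<beta>)))" for s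
  proof -
    have "square_integrable M (\<lambda>\<omega>. (\<chi> i. gf i (x (\<beta> * (s div \<beta>)) \<omega> $ i)) + noise s \<omega>)"
      using that
      by (intro square_integrable_add square_integrable_vec_lambda square_integrable_gf
          noise_second_moment(1)) measurable
    then show ?thesis
      by (simp add: stoch_grad_eq_noise[abs_def] stoch_grad_measurable_in)
  qed
  show "square_integrable M (x t)" "square_integrable M (y t)"
    using iterates_closed[OF mixing_closed_square_integrable grad, of "Suc t" t] by auto
qed


lemma grad_noise_sum_second_moment:
  "square_integrable M (\<lambda>\<omega>. \<Sum>j<m. grad_noise (t0 + j) i \<omega>) \<and>
   (\<integral>\<omega>. (norm (\<Sum>j<m. grad_noise (t0 + j) i \<omega>))\<^sup>2 \<partial>M) \<le> real m * \<sigma>\<^sup>2"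
proof (induction m)
  case 0
  then show ?case by (simp add: square_integrable_def)
next
  case (Suc m)
  let ?S = "\<lambda>\<omega>. \<Sum>j<m. grad_noise (t0 + j) i \<omega>"
  let ?e = "grad_noise (t0 + m) i"
  let ?K = "{(s, j). s < t0 + m}"
  have S: "square_integrable M ?S" "(\<integral>\<omega>. (norm (?S \<omega>))\<^sup>2 \<partial>M) \<le> real m * \<sigma>\<^sup>2"
    using Suc by auto
  have S_adapted: "?S \<in> borel_measurable (sample_algebra ?K)"
    by (intro borel_measurable_sum grad_noise_adapted) auto
  have "x (\<beta> * ((t0 + m) div \<beta>)) \<in> borel_measurable (sample_algebra ?K)"
    by (intro snapshot_adapted) simp
  then have Z: "(\<lambda>\<omega>. x (\<beta> * ((t0 + m) div \<beta>)) \<omega> $ i) \<in> borel_measurable (sample_algebra ?K)"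
    by measurable
  have fresh: "(t0 + m, i) \<notin> ?K"
    by simp
  have uncorrelated: "integrable M (\<lambda>\<omega>. ?S \<omega> \<bullet> ?e \<omega>)" "(\<integral>\<omega>. ?S \<omega> \<bullet> ?e \<omega> \<partial>M) = 0"
    using oracle_noise_inner_integrable[OF fresh Z measurable_from_sample_algebra[OF S_adapted] S(1)]
      oracle_noise_uncorrelated[OF fresh Z S_adapted S(1)]
    by (simp_all add: grad_noise_def)
  have "(norm (?S \<omega> + ?e \<omega>))\<^sup>2 = (norm (?S \<omega>))\<^sup>2 + 2 * (?S \<omega> \<bullet> ?e \<omega>) + (norm (?e \<omega>))\<^sup>2" for \<omega>
    by (simp add: power2_norm_eq_inner inner_add_left inner_add_right inner_commute)
  then have "(\<integral>\<omega>. (norm (?S \<omega> + ?e \<omega>))\<^sup>2 \<partial>M)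
      = (\<integral>\<omega>. (norm (?S \<omega>))\<^sup>2 \<partial>M) + 2 * (\<integral>\<omega>. ?S \<omega> \<bullet> ?e \<omega> \<partial>M) + (\<integral>\<omega>. (norm (?e \<omega>))\<^sup>2 \<partial>M)"
    using S(1) grad_noise_second_moment(1)[of "t0 + m" i] uncorrelated(1)
    by (simp add: square_integrable_def)
  also have "\<dots> \<le> real (Suc m) * \<sigma>\<^sup>2"
    using S(2) uncorrelated(2) grad_noise_second_moment(2)[of "t0 + m" i] by (simp add: algebra_simps)
  finally show ?case
    using S(1) grad_noise_second_moment(1)[of "t0 + m" i]
    by (simp add: square_integrable_add)
qed

lemma noise_sum_second_moment:
  shows "square_integrable M (\<lambda>\<omega>. \<Sum>j<m. noise (t0 + j) \<omega>)"
    and "(\<integral>\<omega>. (norm (\<Sum>j<m. noise (t0 + j) \<omega>))\<^sup>2 \<partial>M) \<le> real CARD('n) * (real m * \<sigma>\<^sup>2)"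
proof -
  have sum_noise: "(\<Sum>j<m. noise (t0 + j) \<omega>) = (\<chi> i. \<Sum>j<m. grad_noise (t0 + j) i \<omega>)" for \<omega>
    by (simp add: vec_eq_iff noise_def sum_component)
  show "square_integrable M (\<lambda>\<omega>. \<Sum>j<m. noise (t0 + j) \<omega>)"
    unfolding sum_noise using grad_noise_sum_second_moment
    by (intro square_integrable_vec_lambda) blast
  have "(\<integral>\<omega>. (norm (\<Sum>j<m. noise (t0 + j) \<omega>))\<^sup>2 \<partial>M)
      = (\<integral>\<omega>. (\<Sum>i\<in>UNIV. (norm (\<Sum>j<m. grad_noise (t0 + j) i \<omega>))\<^sup>2) \<partial>M)"
    unfolding sum_noise by (simp add: norm_vec_sq)
  also have "\<dots> = (\<Sum>i\<in>UNIV. (\<integral>\<omega>. (norm (\<Sum>j<m. grad_noise (t0 + j) i \<omega>))\<^sup>2 \<partial>M))"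
    using grad_noise_sum_second_moment
    by (intro Bochner_Integration.integral_sum) (auto simp: square_integrable_def)
  also have "\<dots> \<le> (\<Sum>i\<in>(UNIV::'n set). real m * \<sigma>\<^sup>2)"
    using grad_noise_sum_second_moment by (intro sum_mono) blast
  finally show "(\<integral>\<omega>. (norm (\<Sum>j<m. noise (t0 + j) \<omega>))\<^sup>2 \<partial>M) \<le> real CARD('n) * (real m * \<sigma>\<^sup>2)"
    by simp
qed

lemma y_within_round:
  "j < \<beta> \<Longrightarrow> y (\<beta> * k + j) \<omega> = y (\<beta> * k) \<omega> + stoch_grad (\<beta> * k + j) \<omega> - stoch_grad (\<beta> * k) \<omega>"
proof (induction j)
  case (Suc j)
  then show ?case
    using y_inner_stoch_grad[of j k \<omega>] by simp
qed simp

text \<open>Within a round all stochastic gradients are evaluated at the same snapshot, so their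
  differences are pure noise.\<close>
lemma stoch_grad_diff_within_round:
  assumes "j < \<beta>"
  shows "stoch_grad (\<beta> * k + j) \<omega> - stoch_grad (\<beta> * k) \<omega> = noise (\<beta> * k + j) \<omega> - noise (\<beta> * k) \<omega>"
proof -
  have "(\<beta> * k + j) div \<beta> = k" "(\<beta> * k) div \<beta> = k"
    using assms beta_pos by simp_all
  then show ?thesis
    by (simp add: stoch_grad_eq_noise)
qed

lemma round_sum_y:
  "(\<Sum>j<\<beta>. y (\<beta> * k + j) \<omega>) = real \<beta> *\<^sub>R y (\<beta> * k) \<omega>
     + ((\<Sum>j<\<beta> - 1. noise (\<beta> * k + 1 + j) \<omega>) - real (\<beta> - 1) *\<^sub>R noise (\<beta> * k) \<omega>)"
proof -
  obtain m where m: "\<beta> = Suc m"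
    using beta_pos by (cases \<beta>) auto
  have "(\<Sum>j<\<beta>. y (\<beta> * k + j) \<omega>) = (\<Sum>j<\<beta>. y (\<beta> * k) \<omega> + (noise (\<beta> * k + j) \<omega> - noise (\<beta> * k) \<omega>))"
    by (intro sum.cong refl)
      (simp add: y_within_round stoch_grad_diff_within_round flip: add_diff_eq)
  also have "\<dots> = real \<beta> *\<^sub>R y (\<beta> * k) \<omega> + ((\<Sum>j<\<beta>. noise (\<beta> * k + j) \<omega>) - real \<beta> *\<^sub>R noise (\<beta> * k) \<omega>)"
    by (simp add: sum.distrib sum_subtractf sum_constant_scaleR del: sum_constant)
  also have "(\<Sum>j<\<beta>. noise (\<beta> * k + j) \<omega>) = noise (\<beta> * k) \<omega> + (\<Sum>j<\<beta> - 1. noise (\<beta> * k + 1 + j) \<omega>)"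
    unfolding m by (subst sum.lessThan_Suc_shift) (simp add: add.assoc)
  finally show ?thesis
    by (simp add: m scaleR_diff_left algebra_simps)
qed

lemma dev_x_round:
  "dev (x (\<beta> * (k + 1)) \<omega>)
    = (Wbar - avgJ) ** (dev (x (\<beta> * k) \<omega>) - \<gamma> *\<^sub>R dev (\<Sum>j<\<beta>. y (\<beta> * k + j) \<omega>))"
  unfolding x_round
  by (simp add: dev_matrix_mult[OF Wbar_preserves_average] linear_diff[OF linear_dev]
      linear_scale[OF linear_dev])

lemma norm_dev_round_sum_sq_le:
  "(norm (dev (\<Sum>j<\<beta>. y (\<beta> * k + j) \<omega>)))\<^sup>2
    \<le> 2 * (real \<beta>)\<^sup>2 * (norm (dev (y (\<beta> * k) \<omega>)))\<^sup>2
      + 4 * (norm (\<Sum>j<\<beta> - 1. noise (\<beta> * k + 1 + j) \<omega>))\<^sup>2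
      + 4 * (real (\<beta> - 1))\<^sup>2 * (norm (noise (\<beta> * k) \<omega>))\<^sup>2"
proof -
  let ?A = "\<Sum>j<\<beta> - 1. noise (\<beta> * k + 1 + j) \<omega>"
  let ?B = "real (\<beta> - 1) *\<^sub>R noise (\<beta> * k) \<omega>"
  have "(norm (dev (\<Sum>j<\<beta>. y (\<beta> * k + j) \<omega>)))\<^sup>2
      \<le> 2 * (norm (real \<beta> *\<^sub>R dev (y (\<beta> * k) \<omega>)))\<^sup>2 + 2 * (norm (dev (?A - ?B)))\<^sup>2"
    unfolding round_sum_y linear_add[OF linear_dev] linear_scale[OF linear_dev]
    by (rule norm_add_sq_le)
  moreover have "(norm (dev (?A - ?B)))\<^sup>2 \<le> 2 * (norm ?A)\<^sup>2 + 2 * (norm ?B)\<^sup>2"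
    using power_mono[OF norm_dev_le norm_ge_zero, of "?A - ?B" 2] norm_diff_sq_le[of ?A ?B]
    by linarith
  ultimately show ?thesis
    by (simp add: power_mult_distrib)
qed

lemma consensus_step_pointwise:
  "(norm (dev (x (\<beta> * (k + 1)) \<omega>)))\<^sup>2
    \<le> (1 + rho) / 2 * (norm (dev (x (\<beta> * k) \<omega>)))\<^sup>2
      + 2 * rho * \<gamma>\<^sup>2 / (1 - rho) *
        (2 * (real \<beta>)\<^sup>2 * (norm (dev (y (\<beta> * k) \<omega>)))\<^sup>2
         + 4 * (norm (\<Sum>j<\<beta> - 1. noise (\<beta> * k + 1 + j) \<omega>))\<^sup>2
         + 4 * (real (\<beta> - 1))\<^sup>2 * (norm (noise (\<beta> * k) \<omega>))\<^sup>2)"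
proof -
  let ?u = "dev (x (\<beta> * k) \<omega>)" and ?v = "dev (\<Sum>j<\<beta>. y (\<beta> * k + j) \<omega>)"
  have "(norm (dev (x (\<beta> * (k + 1)) \<omega>)))\<^sup>2 \<le> rho * (norm (?u - \<gamma> *\<^sub>R ?v))\<^sup>2"
    unfolding dev_x_round by (rule norm_matrix_mult_sq_le)
  also have "\<dots> \<le> (1 + rho) / 2 * (norm ?u)\<^sup>2 + 2 * rho / (1 - rho) * (\<bar>\<gamma>\<bar> * norm ?v)\<^sup>2"
    using spec_sq_nonneg[of "Wbar - avgJ"] rho_lt_1
    by (intro young_contraction) (auto intro: order_trans[OF norm_triangle_ineq4])
  also have "\<dots> = (1 + rho) / 2 * (norm ?u)\<^sup>2 + 2 * rho * \<gamma>\<^sup>2 / (1 - rho) * (norm ?v)\<^sup>2"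
    by (simp add: power_mult_distrib)
  also have "\<dots> \<le> (1 + rho) / 2 * (norm ?u)\<^sup>2 + 2 * rho * \<gamma>\<^sup>2 / (1 - rho) *
        (2 * (real \<beta>)\<^sup>2 * (norm (dev (y (\<beta> * k) \<omega>)))\<^sup>2
         + 4 * (norm (\<Sum>j<\<beta> - 1. noise (\<beta> * k + 1 + j) \<omega>))\<^sup>2
         + 4 * (real (\<beta> - 1))\<^sup>2 * (norm (noise (\<beta> * k) \<omega>))\<^sup>2)"
    using spec_sq_nonneg[of "Wbar - avgJ"] rho_lt_1
    by (intro add_left_mono mult_left_mono norm_dev_round_sum_sq_le) simp_all
  finally show ?thesis .
qed

lemma round_noise_second_moment:
  "4 * (\<integral>\<omega>. (norm (\<Sum>j<\<beta> - 1. noise (\<beta> * k + 1 + j) \<omega>))\<^sup>2 \<partial>M)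
     + 4 * (real (\<beta> - 1))\<^sup>2 * (\<integral>\<omega>. (norm (noise (\<beta> * k) \<omega>))\<^sup>2 \<partial>M)
   \<le> 4 * (real \<beta>)\<^sup>2 * real CARD('n) * \<sigma>\<^sup>2"
proof -
  have "4 * (\<integral>\<omega>. (norm (\<Sum>j<\<beta> - 1. noise (\<beta> * k + 1 + j) \<omega>))\<^sup>2 \<partial>M)
      + 4 * (real (\<beta> - 1))\<^sup>2 * (\<integral>\<omega>. (norm (noise (\<beta> * k) \<omega>))\<^sup>2 \<partial>M)
      \<le> 4 * (real CARD('n) * (real (\<beta> - 1) * \<sigma>\<^sup>2)) + 4 * (real (\<beta> - 1))\<^sup>2 * (real CARD('n) * \<sigma>\<^sup>2)"
    using noise_sum_second_moment(2)[of "\<beta> * k + 1" "\<beta> - 1"] noise_second_moment(2)[of "\<beta> * k"]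
    by (intro add_mono mult_left_mono) simp_all
  also have "\<dots> = 4 * (real (\<beta> - 1) * real \<beta>) * real CARD('n) * \<sigma>\<^sup>2"
    using beta_pos by (simp add: of_nat_diff power2_eq_square algebra_simps)
  also have "\<dots> \<le> 4 * (real \<beta>)\<^sup>2 * real CARD('n) * \<sigma>\<^sup>2"
    by (intro mult_right_mono) (auto simp: power2_eq_square intro!: mult_right_mono)
  finally show ?thesis .
qed

definition x_consensus_error :: "nat \<Rightarrow> real" where
  "x_consensus_error k = (\<integral>\<omega>. (norm (dev (x (\<beta> * k) \<omega>)))\<^sup>2 \<partial>M)"

definition y_consensus_error :: "nat \<Rightarrow> real" where
  "y_consensus_error k = (\<integral>\<omega>. (norm (dev (y (\<beta> * k) \<omega>)))\<^sup>2 \<partial>M)"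

lemma consensus_step:
  "x_consensus_error (Suc k) \<le> (1 + rho) / 2 * x_consensus_error k
     + 2 * rho * \<gamma>\<^sup>2 / (1 - rho) * (2 * (real \<beta>)\<^sup>2 * y_consensus_error k
       + 4 * (real \<beta>)\<^sup>2 * real CARD('n) * \<sigma>\<^sup>2)"
proof -
  let ?C = "2 * rho * \<gamma>\<^sup>2 / (1 - rho)"
  let ?A = "\<lambda>\<omega>. (norm (\<Sum>j<\<beta> - 1. noise (\<beta> * k + 1 + j) \<omega>))\<^sup>2"
  let ?B = "\<lambda>\<omega>. (norm (noise (\<beta> * k) \<omega>))\<^sup>2"
  have C: "0 \<le> ?C"
    using spec_sq_nonneg[of "Wbar - avgJ"] rho_lt_1 by simp
  have dev_integrable: "integrable M (\<lambda>\<omega>. (norm (dev (x t \<omega>)))\<^sup>2)"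
    "integrable M (\<lambda>\<omega>. (norm (dev (y t \<omega>)))\<^sup>2)" for t
    using square_integrable_dev[OF x_measurable x_square_integrable]
      square_integrable_dev[OF y_measurable y_square_integrable]
    by (simp_all add: square_integrable_def)
  have noise_integrable: "integrable M ?A" "integrable M ?B"
    using noise_sum_second_moment(1)[of "\<beta> * k + 1" "\<beta> - 1"] noise_second_moment(1)[of "\<beta> * k"]
    unfolding square_integrable_def .
  have "x_consensus_error (Suc k) = (\<integral>\<omega>. (norm (dev (x (\<beta> * (k + 1)) \<omega>)))\<^sup>2 \<partial>M)"
    by (simp add: x_consensus_error_def)
  also have "\<dots> \<le> (\<integral>\<omega>. (1 + rho) / 2 * (norm (dev (x (\<beta> * k) \<omega>)))\<^sup>2
          + ?C * (2 * (real \<beta>)\<^sup>2 * (norm (dev (y (\<beta> * k) \<omega>)))\<^sup>2 + 4 * ?A \<omega>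
            + 4 * (real (\<beta> - 1))\<^sup>2 * ?B \<omega>) \<partial>M)"
    using dev_integrable noise_integrable by (intro integral_mono consensus_step_pointwise) auto
  also have "\<dots> = (1 + rho) / 2 * x_consensus_error k + ?C * (2 * (real \<beta>)\<^sup>2 * y_consensus_error k
      + (4 * (\<integral>\<omega>. ?A \<omega> \<partial>M) + 4 * (real (\<beta> - 1))\<^sup>2 * (\<integral>\<omega>. ?B \<omega> \<partial>M)))"
    using dev_integrable noise_integrable
    by (simp add: x_consensus_error_def y_consensus_error_def algebra_simps)
  also have "\<dots> \<le> (1 + rho) / 2 * x_consensus_error k + ?C * (2 * (real \<beta>)\<^sup>2 * y_consensus_error k
      + 4 * (real \<beta>)\<^sup>2 * real CARD('n) * \<sigma>\<^sup>2)"
    using round_noise_second_moment[of k] C by (intro add_left_mono mult_left_mono) simp_all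
  finally show ?thesis .
qed

lemma consensus_error_average:
  assumes "1 \<le> K"
  shows "(1 / real K) * (\<Sum>k<K. x_consensus_error k)
     \<le> 2 * x_consensus_error 0 / ((1 - rho) * real K)
       + 16 * real CARD('n) * \<gamma>\<^sup>2 * (real \<beta>)\<^sup>2 * rho / (1 - rho)\<^sup>2 * \<sigma>\<^sup>2
       + 8 * \<gamma>\<^sup>2 * (real \<beta>)\<^sup>2 * rho / ((1 - rho)\<^sup>2 * real K) * (\<Sum>k<K. y_consensus_error k)"
proof -
  let ?c = "\<lambda>k. 2 * rho * \<gamma>\<^sup>2 / (1 - rho)
    * (2 * (real \<beta>)\<^sup>2 * y_consensus_error k + 4 * (real \<beta>)\<^sup>2 * real CARD('n) * \<sigma>\<^sup>2)"
  have K: "0 < real K" and rho: "0 < 1 - rho"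
    using assms rho_lt_1 by simp_all
  have algebra: "1 / K' * (2 / d * (e + 2 * r * c / d * (2 * b * Q + K' * (4 * b * n * s))))
      = 2 * e / (d * K') + 16 * n * c * b * r / d\<^sup>2 * s + 8 * c * b * r / (d\<^sup>2 * K') * Q"
    if "0 < K'" "0 < d" for K' d e r c b Q n s :: real
    using that by (simp add: field_simps power2_eq_square)
  have "(\<Sum>k<K. x_consensus_error k) \<le> 2 / (1 - rho) * (x_consensus_error 0 + (\<Sum>k<K. ?c k))"
    using rho_lt_1 consensus_step by (intro sum_le_of_contraction) (simp_all add: x_consensus_error_def)
  also have "(\<Sum>k<K. ?c k) = 2 * rho * \<gamma>\<^sup>2 / (1 - rho) * (2 * (real \<beta>)\<^sup>2 * (\<Sum>k<K. y_consensus_error k)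
      + real K * (4 * (real \<beta>)\<^sup>2 * real CARD('n) * \<sigma>\<^sup>2))"
    by (subst sum_distrib_left[symmetric]) (simp add: sum.distrib sum_distrib_left)
  finally have "(1 / real K) * (\<Sum>k<K. x_consensus_error k)
      \<le> (1 / real K) * (2 / (1 - rho) * (x_consensus_error 0 + 2 * rho * \<gamma>\<^sup>2 / (1 - rho)
        * (2 * (real \<beta>)\<^sup>2 * (\<Sum>k<K. y_consensus_error k)
           + real K * (4 * (real \<beta>)\<^sup>2 * real CARD('n) * \<sigma>\<^sup>2))))"
    by (rule mult_left_mono) (use K in simp)
  also have "\<dots> = 2 * x_consensus_error 0 / ((1 - rho) * real K)
       + 16 * real CARD('n) * \<gamma>\<^sup>2 * (real \<beta>)\<^sup>2 * rho / (1 - rho)\<^sup>2 * \<sigma>\<^sup>2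
       + 8 * \<gamma>\<^sup>2 * (real \<beta>)\<^sup>2 * rho / ((1 - rho)\<^sup>2 * real K) * (\<Sum>k<K. y_consensus_error k)"
    by (rule algebra[OF K rho])
  finally show ?thesis .
qed

end

theorem lemma7:
  fixes M :: "'a measure"
    and D :: "'n::finite \<Rightarrow> 's measure"
    and \<xi> :: "nat \<Rightarrow> 'n \<Rightarrow> 'a \<Rightarrow> 's"
    and f :: "'n \<Rightarrow> real^'p::finite \<Rightarrow> real"
    and gf :: "'n \<Rightarrow> real^'p \<Rightarrow> real^'p"
    and g :: "'n \<Rightarrow> real^'p \<Rightarrow> 's \<Rightarrow> real^'p"
    and W Wbar :: "real^'n^'n"
    and L \<sigma> \<gamma> :: real
    and \<alpha> \<beta> K :: nat
    and x0 :: "real^'p^'n"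
    and x y :: "nat \<Rightarrow> 'a \<Rightarrow> real^'p^'n"
  assumes P: "prob_space M"
    \<comment> \<open>samples: node i at iteration t draws xi t i ~ D i, all independent\<close>
    and distr: "\<And>t i. distr M (D i) (\<xi> t i) = D i"
    and indep: "prob_space.indep_vars M (\<lambda>(t, i). D i) (\<lambda>(t, i). \<xi> t i) UNIV"
    and g_meas: "\<And>i. (\<lambda>(z, s). g i z s) \<in> borel_measurable (borel \<Otimes>\<^sub>M D i)"
    \<comment> \<open>(S): each f_i has L-Lipschitz gradient gf i\<close>
    and grad: "\<And>i z. (f i has_derivative (\<lambda>h. gf i z \<bullet> h)) (at z)"
    and S: "\<And>i u v. norm (gf i u - gf i v) \<le> L * norm (u - v)"
    \<comment> \<open>unbiased stochastic oracle and (V)\<close>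
    and unbiased: "\<And>i z. integrable (D i) (g i z) \<and> (\<integral>s. g i z s \<partial>D i) = gf i z"
    and V: "\<And>i z. integrable (D i) (\<lambda>s. (norm (g i z s - gf i z))\<^sup>2) \<and>
                  (\<integral>s. (norm (g i z s - gf i z))\<^sup>2 \<partial>D i) \<le> \<sigma>\<^sup>2"
    \<comment> \<open>(G)\<close>
    and G: "doubly_stochastic W" "spec_sq (W - avgJ) < 1"
    \<comment> \<open>mixing matrix of FlexGT or Acc-FlexGT\<close>
    and Wbar: "Wbar = mat_pow W \<alpha> \<or> Wbar = acc_mix W (acc_eta (spec_sq (W - avgJ))) \<alpha>"
    and rho_bar: "spec_sq (Wbar - avgJ) < 1"
    and params: "1 \<le> \<alpha>" "1 \<le> \<beta>" "0 < \<gamma>"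
    \<comment> \<open>the FlexGT recursion; stochastic gradients use snapshots z_t = x_{beta floor(t/beta)}\<close>
    and x_init: "\<And>\<omega>. x 0 \<omega> = x0"
    and y_init: "\<And>\<omega>. y 0 \<omega> = (\<chi> i. g i (x 0 \<omega> $ i) (\<xi> 0 i \<omega>))"
    and x_inner: "\<And>k j \<omega>. j + 2 \<le> \<beta> \<Longrightarrow>
       x (\<beta> * k + j + 1) \<omega> = x (\<beta> * k + j) \<omega> - \<gamma> *\<^sub>R y (\<beta> * k + j) \<omega>"
    and y_inner: "\<And>k j \<omega>. j + 2 \<le> \<beta> \<Longrightarrow>
       y (\<beta> * k + j + 1) \<omega> = y (\<beta> * k + j) \<omega>
         + (\<chi> i. g i (x (\<beta> * ((\<beta> * k + j + 1) div \<beta>)) \<omega> $ i) (\<xi> (\<beta> * k + j + 1) i \<omega>))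
         - (\<chi> i. g i (x (\<beta> * ((\<beta> * k + j) div \<beta>)) \<omega> $ i) (\<xi> (\<beta> * k + j) i \<omega>))"
    and x_round: "\<And>k \<omega>.
       x (\<beta> * (k + 1)) \<omega> = Wbar ** (x (\<beta> * k) \<omega> - \<gamma> *\<^sub>R (\<Sum>j<\<beta>. y (\<beta> * k + j) \<omega>))"
    and y_round: "\<And>k \<omega>.
       y (\<beta> * (k + 1)) \<omega> = Wbar ** (y (\<beta> * k) \<omega>
         + (\<chi> i. g i (x (\<beta> * ((\<beta> * (k + 1)) div \<beta>)) \<omega> $ i) (\<xi> (\<beta> * (k + 1)) i \<omega>))
         - (\<chi> i. g i (x (\<beta> * ((\<beta> * k) div \<beta>)) \<omega> $ i) (\<xi> (\<beta> * k) i \<omega>)))"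
    and step: "\<gamma> \<le> 1 / (4 * real \<beta> * L)"
    and K: "1 \<le> K"
  shows "(1 / real K) * (\<Sum>k<K. \<integral>\<omega>. (norm (dev (x (\<beta> * k) \<omega>)))\<^sup>2 \<partial>M)
     \<le> 2 * (\<integral>\<omega>. (norm (dev (x 0 \<omega>)))\<^sup>2 \<partial>M) / ((1 - spec_sq (Wbar - avgJ)) * real K)
       + 16 * real CARD('n) * \<gamma>\<^sup>2 * (real \<beta>)\<^sup>2 * spec_sq (Wbar - avgJ)
           / (1 - spec_sq (Wbar - avgJ))\<^sup>2 * \<sigma>\<^sup>2
       + 8 * \<gamma>\<^sup>2 * (real \<beta>)\<^sup>2 * spec_sq (Wbar - avgJ) / ((1 - spec_sq (Wbar - avgJ))\<^sup>2 * real K)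
           * (\<Sum>k<K. \<integral>\<omega>. (norm (dev (y (\<beta> * k) \<omega>)))\<^sup>2 \<partial>M)"
proof -
  interpret prob_space M
    by (rule P)
  have "preserves_average Wbar"
    using Wbar doubly_stochastic_preserves_average[OF G(1)] mat_pow_preserves_average
      acc_mix_preserves_average
    by auto
  then interpret flexgt M D \<xi> gf g L \<sigma> Wbar \<gamma> \<beta> x0 x y
    by unfold_locales
      (use distr indep g_meas S unbiased V rho_bar params x_init y_init x_inner y_inner x_round
        y_round in auto)
  show ?thesis
    using consensus_error_average[OF K] by (simp add: x_consensus_error_def y_consensus_error_def)
qed

end
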